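(* For every positive integer $r$ and integers $0\le k\le n$, \[ q^{r\binom{k+1}{2}+(1-r)k}\,[r]_q^k\,[k]_{q^r}!\,S_r[n,k]=\sum_{\ell=0}^kq^{rk(k-\ell)}\,A^r_{n,\ell}(q)\,{n-\ell\brack k-\ell}_{q^r}. \]
   Context: $[k]_q=1+\dots+q^{k-1}$, $[0]_q=0$, $[k]_q!=\prod_{i=1}^k[i]_q$, ${n\brack k}_q=\frac{[n]_q!}{[k]_q![n-k]_q!}$; the subscript $q^r$ means $q$ replaced by $q^r$. The $r$-colored $q$-Stirling numbers of the second kind: $S_r[0,k]=\delta_{0k}$ and $S_r[n,k]=S_r[n-1,k-1]+[rk+1]_qS_r[n-1,k]$ for $n\ge1$. The colored permutation group $\mathbb{Z}_r\wr\mathfrak{S}_n$ consists of words $\pi=\pi_1^{z_1}\cdots\pi_n^{z_n}$ with $\pi_1\cdots\pi_n\in\mathfrak{S}_n$ and $z_i\in\{0,\dots,r-1\}$ ($k^0$ written $k$), totally ordered by $n^{r-1}<\dots<n^1<\dots<1^{r-1}<\dots<1^1<0<1<\dots<n$. With $\pi_0^{z_0}=0$, $\mathrm{Des}_r(\pi)=\{i\in\{0,\dots,n-1\}:\pi_i^{z_i}>\pi_{i+1}^{z_{i+1}}\}$, $\mathrm{des}_r(\pi)=|\mathrm{Des}_r(\pi)|$, $\mathrm{fmaj}_r(\pi)=r\sum_{i\in\mathrm{Des}_r(\pi)}i+\sum_iz_i$, and $A^r_{n,k}(q)$ is defined by $\sum_{\pi\in\mathbb{Z}_r\wr\mathfrak{S}_n}t^{\mathrm{des}_r(\pi)}q^{\mathrm{fmaj}_r(\pi)}=\sum_{k=0}^nA^r_{n,k}(q)t^k$.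 *)

theory Defs
  imports "HOL-Computational_Algebra.Polynomial" "HOL-Combinatorics.Permutations"
begin

definition qint :: "'a::comm_ring_1 \<Rightarrow> nat \<Rightarrow> 'a" where
  "qint q k = (\<Sum>i<k. q ^ i)"

definition qfact :: "'a::comm_ring_1 \<Rightarrow> nat \<Rightarrow> 'a" where
  "qfact q k = (\<Prod>i=1..k. qint q i)"

definition qbinom :: "'a::{comm_ring_1,idom_divide} \<Rightarrow> nat \<Rightarrow> nat \<Rightarrow> 'a" where
  "qbinom q n k = qfact q n div (qfact q k * qfact q (n - k))"

abbreviation qX :: "int poly" where "qX \<equiv> [:0, 1:]"

fun Scol :: "nat \<Rightarrow> nat \<Rightarrow> nat \<Rightarrow> int poly" where
  "Scol r 0 k = (if k = 0 then 1 else 0)"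
| "Scol r (Suc n) 0 = qint qX (r * 0 + 1) * Scol r n 0"
| "Scol r (Suc n) (Suc k) = Scol r n k + qint qX (r * Suc k + 1) * Scol r n (Suc k)"

text \<open>A colored letter a^c is the pair (a, c); the letter 0 is (0,0).
  Total order: n^(r-1) < ... < n^1 < ... < 1^(r-1) < ... < 1^1 < 0 < 1 < ... < n.\<close>
definition colored_less :: "nat \<times> nat \<Rightarrow> nat \<times> nat \<Rightarrow> bool" where
  "colored_less x y = (case x of (a, c) \<Rightarrow> case y of (b, d) \<Rightarrow>
      (c = 0 \<and> d = 0 \<and> a < b) \<or> (c > 0 \<and> d = 0) \<or>
      (c > 0 \<and> d > 0 \<and> (b < a \<or> (a = b \<and> d < c))))"

text \<open>An element of Z_r wr S_n is a pair (sigma, z): sigma a permutation of {1..n}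
  (so sigma 0 = 0), z a coloring of positions 1..n with values < r (z 0 = 0, and
  z vanishes outside {1..n}). Position i carries the colored letter (sigma i, z i);
  position 0 carries the letter 0 = (0,0).\<close>
definition colored_perms :: "nat \<Rightarrow> nat \<Rightarrow> ((nat \<Rightarrow> nat) \<times> (nat \<Rightarrow> nat)) set" where
  "colored_perms r n = {(\<sigma>, z). \<sigma> permutes {1..n} \<and>
      (\<forall>i\<in>{1..n}. z i < r) \<and> (\<forall>i. i \<notin> {1..n} \<longrightarrow> z i = 0)}"

definition Des_r :: "nat \<Rightarrow> (nat \<Rightarrow> nat) \<times> (nat \<Rightarrow> nat) \<Rightarrow> nat set" where
  "Des_r n p = (case p of (\<sigma>, z) \<Rightarrow>
      {i \<in> {0..<n}. colored_less (\<sigma> (Suc i), z (Suc i)) (\<sigma> i, z i)})"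

definition des_r :: "nat \<Rightarrow> (nat \<Rightarrow> nat) \<times> (nat \<Rightarrow> nat) \<Rightarrow> nat" where
  "des_r n p = card (Des_r n p)"

definition fmaj_r :: "nat \<Rightarrow> nat \<Rightarrow> (nat \<Rightarrow> nat) \<times> (nat \<Rightarrow> nat) \<Rightarrow> nat" where
  "fmaj_r r n p = r * (\<Sum>i\<in>Des_r n p. i) + (\<Sum>i=1..n. snd p i)"

definition Acol :: "nat \<Rightarrow> nat \<Rightarrow> nat \<Rightarrow> int poly" where
  "Acol r n k = (\<Sum>p\<in>{p \<in> colored_perms r n. des_r n p = k}. monom 1 (fmaj_r r n p))"

end

theory Submission
  imports Defs "HOL-Library.Product_Lexorder"
begin

text \<open>
  Regard [rm+1]_q^n as a function of m and expand it in the Gaussian binomials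
  [m, k]_{q^r}, 0 <= k <= n. The expansion is unique, since [m, k] = 0 for m < k and
  [k, k] = 1, and both sides of the theorem are the coefficient of [m, k]_{q^r}, computed
  in two ways.

  The recursion of S_r gives [rm+1]^n = sum_k S_r[n,k] prod_{i<k} ([rm+1] - [ri+1]), and
  since [rm+1] - [ri+1] = q^{ri+1} [r]_q [m-i]_{q^r}, the product is
  q^{r(k choose 2)+k} [r]_q^k [k]_{q^r}! [m, k]_{q^r}.

  The colored Worpitzky identity [rm+1]^n = sum_l A^r_{n,l}(q) [m+n-l, n]_{q^r} counts the
  words w : {1..n} -> {0..rm} by q^(sum w). Such words correspond to pairs of a colored
  permutation pi with des pi <= m and a weakly decreasing sequence mu_1 >= ... >= mu_n
  bounded by m - des pi, the letter pi_j receiving the value r (d_j + mu_j) + z_j, where d_j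
  is the number of descents at positions >= j. Conversely, pi is recovered by sorting {1..n}
  by decreasing w div r, ties being ordered by the colored order of the letters (a, w a mod r).
  Expanding [m+n-l, n]_{q^r} by q-Vandermonde then yields the right-hand side.
\<close>

section \<open>q-integers and Gaussian binomial coefficients\<close>

lemma qint_0 [simp]: "qint Q 0 = 0"
  by (simp add: qint_def)

lemma qint_Suc: "qint Q (Suc k) = qint Q k + Q ^ k"
  by (simp add: qint_def)

lemma qint_add: "qint Q (a + b) = qint Q a + Q ^ a * qint Q b"
  by (induction b) (simp_all add: qint_Suc algebra_simps power_add)

lemma qint_mult: "qint Q (a * b) = qint Q a * qint (Q ^ a) b"
proof (induction b)
  case (Suc b)
  have "qint Q (a * Suc b) = qint Q (a * b) + Q ^ (a * b) * qint Q a"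
    using qint_add[of Q "a * b" a] by (simp add: algebra_simps)
  then show ?case
    using Suc by (simp add: qint_Suc algebra_simps power_mult)
qed simp

lemma qfact_0 [simp]: "qfact Q 0 = 1"
  by (simp add: qfact_def)

lemma qfact_Suc: "qfact Q (Suc k) = qfact Q k * qint Q (Suc k)"
  by (simp add: qfact_def)

fun gauss_binom :: "'a::comm_ring_1 \<Rightarrow> nat \<Rightarrow> nat \<Rightarrow> 'a" where
  "gauss_binom Q N 0 = 1"
| "gauss_binom Q 0 (Suc k) = 0"
| "gauss_binom Q (Suc N) (Suc k) = gauss_binom Q N k + Q ^ Suc k * gauss_binom Q N (Suc k)"

lemma gauss_binom_eq_0: "N < k \<Longrightarrow> gauss_binom Q N k = 0"
  by (induction Q N k rule: gauss_binom.induct) auto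

lemma gauss_binom_same [simp]: "gauss_binom Q N N = 1"
  by (induction N) (simp_all add: gauss_binom_eq_0)

lemma gauss_binom_Suc_Suc':
  "gauss_binom Q (Suc N) (Suc k) = Q ^ (N - k) * gauss_binom Q N k + gauss_binom Q N (Suc k)"
proof (induction N arbitrary: k)
  case 0
  then show ?case by (cases k) simp_all
next
  case (Suc N)
  show ?case
  proof (cases k)
    case 0
    then show ?thesis using Suc.IH[of 0] by (simp add: algebra_simps)
  next
    case (Suc k')
    consider "k' < N" | "k' = N" | "N < k'" by linarith
    then show ?thesis
    proof cases
      case 1
      then have e: "N - k' = Suc (N - Suc k')" by simp
      let ?g = "gauss_binom Q N"
      have "gauss_binom Q (Suc (Suc N)) (Suc (Suc k'))
          = gauss_binom Q (Suc N) (Suc k')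
            + Q ^ Suc (Suc k') * gauss_binom Q (Suc N) (Suc (Suc k'))"
        by (rule gauss_binom.simps(3))
      also have "\<dots> = (Q ^ (N - k') * ?g k' + ?g (Suc k'))
          + Q ^ Suc (Suc k') * (Q ^ (N - Suc k') * ?g (Suc k') + ?g (Suc (Suc k')))"
        by (simp only: Suc.IH)
      also have "\<dots> = Q ^ (N - k') * (?g k' + Q ^ Suc k' * ?g (Suc k'))
          + (?g (Suc k') + Q ^ Suc (Suc k') * ?g (Suc (Suc k')))"
        by (simp add: e algebra_simps)
      finally show ?thesis
        using Suc by simp
    qed (simp_all add: Suc gauss_binom_eq_0)
  qed
qed

lemma gauss_binom_symmetric: "k \<le> N \<Longrightarrow> gauss_binom Q N (N - k) = gauss_binom Q N k"
proof (induction N arbitrary: k)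
  case (Suc N)
  consider "k = 0" | "k = Suc N" | k' where "k = Suc k'" "k' < N"
    using Suc.prems by (cases k) (auto simp: le_less)
  then show ?case
  proof cases
    case 3
    have "gauss_binom Q (Suc N) (Suc N - k) = gauss_binom Q (Suc N) (Suc (N - Suc k'))"
      using 3 by (simp only: diff_Suc_Suc Suc_diff_Suc)
    also have "\<dots> = Q ^ (N - (N - Suc k')) * gauss_binom Q N (N - Suc k')
        + gauss_binom Q N (Suc (N - Suc k'))"
      by (rule gauss_binom_Suc_Suc')
    also have "\<dots> = Q ^ Suc k' * gauss_binom Q N (Suc k') + gauss_binom Q N k'"
      using 3 Suc.IH[of k'] Suc.IH[of "Suc k'"] by (simp add: Suc_diff_Suc)
    finally show ?thesis
      using 3 by (simp add: algebra_simps)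
  qed (simp_all add: gauss_binom_eq_0)
qed simp

lemma prod_qint_falling: "(\<Prod>i<k. qint Q (m - i)) = qfact Q k * gauss_binom Q m k"
proof (induction m arbitrary: k)
  case 0
  then show ?case by (cases k) (simp_all add: prod.lessThan_Suc_shift)
next
  case (Suc m)
  show ?case
  proof (cases k)
    case (Suc k')
    have falling: "(\<Prod>i<Suc k. qint Q (Suc m - i)) = qint Q (Suc m) * (\<Prod>i<k. qint Q (m - i))" for k
      unfolding prod.lessThan_Suc_shift by simp
    show ?thesis
    proof (cases "k' \<le> m")
      case True
      have "qint Q (Suc m) = qint Q (Suc k') + Q ^ Suc k' * qint Q (m - k')"
        using qint_add[of Q "Suc k'" "m - k'"] True by simp
      moreover have "qfact Q (Suc k') * gauss_binom Q m (Suc k')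
          = qfact Q k' * gauss_binom Q m k' * qint Q (m - k')"
        using Suc.IH[of "Suc k'"] Suc.IH[of k'] by simp
      ultimately show ?thesis
        using Suc.IH[of k'] \<open>k = Suc k'\<close> falling[of k'] by (simp add: qfact_Suc algebra_simps)
    next
      case False
      then show ?thesis
        using Suc.IH[of k'] \<open>k = Suc k'\<close> falling[of k'] by (simp add: gauss_binom_eq_0)
    qed
  qed simp
qed

lemma prod_qint_falling_qfact: "k \<le> m \<Longrightarrow> (\<Prod>i<k. qint Q (m - i)) * qfact Q (m - k) = qfact Q m"
proof (induction k)
  case (Suc k)
  then have "m - k = Suc (m - Suc k)" by simp
  then show ?case
    using Suc by (simp add: qfact_Suc algebra_simps)
qed simp

lemma qfact_eq_gauss_binom:
  "k \<le> N \<Longrightarrow> qfact Q N = qfact Q k * qfact Q (N - k) * gauss_binom Q N k"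
  by (simp flip: prod_qint_falling_qfact add: prod_qint_falling algebra_simps)

lemma qbinom_eq_gauss_binom:
  fixes Q :: "'a::{comm_ring_1,idom_divide}"
  assumes "k \<le> N" and "qfact Q k * qfact Q (N - k) \<noteq> 0"
  shows "qbinom Q N k = gauss_binom Q N k"
  using assms by (simp add: qbinom_def qfact_eq_gauss_binom)

lemma gauss_binom_hockey_stick:
  "gauss_binom Q (h + Suc n) (Suc n) = (\<Sum>t\<le>h. Q ^ t * gauss_binom Q (t + n) n)"
proof (induction h)
  case (Suc h)
  have "gauss_binom Q (Suc h + Suc n) (Suc n)
      = Q ^ Suc h * gauss_binom Q (Suc h + n) n + gauss_binom Q (h + Suc n) (Suc n)"
    using gauss_binom_Suc_Suc'[of Q "h + Suc n" n] by simp
  then show ?case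
    using Suc by simp
qed simp

lemma gauss_binom_vandermonde:
  "gauss_binom Q (a + b) n
     = (\<Sum>j\<le>n. Q ^ (j * (b + j - n)) * gauss_binom Q a j * gauss_binom Q b (n - j))"
proof (induction a arbitrary: n)
  case 0
  have "(\<Sum>j\<le>n. Q ^ (j * (b + j - n)) * gauss_binom Q 0 j * gauss_binom Q b (n - j))
      = (\<Sum>j\<in>{0}. Q ^ (j * (b + j - n)) * gauss_binom Q 0 j * gauss_binom Q b (n - j))"
    by (rule sum.mono_neutral_right) (auto simp: gauss_binom_eq_0)
  then show ?case by simp
next
  case (Suc a)
  show ?case
  proof (cases n)
    case (Suc n')
    let ?g = "gauss_binom Q"
    have shift: "Q ^ (Suc i * (b + Suc i - n)) * (Q ^ (a - i) * ?g a i) * ?g b (n' - i)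
        = Q ^ (a + b - n') * (Q ^ (i * (b + i - n')) * ?g a i * ?g b (n' - i))" for i
    proof (cases "i \<le> a \<and> n' - i \<le> b")
      case True
      then obtain d e where d: "b + i = n' + d" and e: "a = i + e"
        using le_Suc_ex le_diff_conv by (metis add.commute)
      then have "Suc i * (b + Suc i - n) + (a - i) = (a + b - n') + i * (b + i - n')"
        using Suc by simp
      then show ?thesis
        by (simp flip: power_add add: ac_simps)
    qed (auto simp: gauss_binom_eq_0)
    have "?g (Suc a + b) n = Q ^ (a + b - n') * ?g (a + b) n' + ?g (a + b) n"
      unfolding Suc add_Suc by (rule gauss_binom_Suc_Suc')
    also have "\<dots> = (\<Sum>i\<le>n'. Q ^ (Suc i * (b + Suc i - n)) * (Q ^ (a - i) * ?g a i) * ?g b (n' - i))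
        + (\<Sum>j\<le>n. Q ^ (j * (b + j - n)) * ?g a j * ?g b (n - j))"
      by (simp only: Suc.IH shift sum_distrib_left)
    also have "\<dots> = (\<Sum>j\<le>n. Q ^ (j * (b + j - n)) * ?g (Suc a) j * ?g b (n - j))"
      unfolding Suc sum.atMost_Suc_shift
      by (simp add: gauss_binom_Suc_Suc' sum.distrib algebra_simps del: gauss_binom.simps(3))
    finally show ?thesis .
  qed simp
qed

lemma gauss_binom_vandermonde_shifted:
  assumes "l \<le> n"
  shows "gauss_binom Q (m + n - l) n
    = (\<Sum>k=l..n. Q ^ (k * (k - l)) * gauss_binom Q (n - l) (k - l) * gauss_binom Q m k)"
proof -
  let ?t = "\<lambda>k. Q ^ (k * (n - l + k - n)) * gauss_binom Q m k * gauss_binom Q (n - l) (n - k)"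
  have "m + n - l = m + (n - l)"
    using assms by simp
  then have "gauss_binom Q (m + n - l) n = (\<Sum>k\<le>n. ?t k)"
    by (simp only: gauss_binom_vandermonde)
  also have "\<dots> = (\<Sum>k=l..n. ?t k)"
    using assms by (intro sum.mono_neutral_right) (auto simp: gauss_binom_eq_0)
  also have "\<dots> = (\<Sum>k=l..n. Q ^ (k * (k - l)) * gauss_binom Q (n - l) (k - l) * gauss_binom Q m k)"
  proof (rule sum.cong[OF refl])
    fix k assume "k \<in> {l..n}"
    then have "n - l + k - n = k - l"
      and "gauss_binom Q (n - l) (n - k) = gauss_binom Q (n - l) (k - l)"
      using gauss_binom_symmetric[of "n - k" "n - l" Q] by auto
    then show "?t k = Q ^ (k * (k - l)) * gauss_binom Q (n - l) (k - l) * gauss_binom Q m k"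
      by (simp add: ac_simps)
  qed
  finally show ?thesis .
qed

lemma sum_gauss_binom_expand:
  fixes c :: "nat \<Rightarrow> 'a::comm_ring_1"
  shows "(\<Sum>l\<le>n. c l * gauss_binom Q (m + n - l) n)
    = (\<Sum>k\<le>n. (\<Sum>l\<le>k. Q ^ (k * (k - l)) * c l * gauss_binom Q (n - l) (k - l)) * gauss_binom Q m k)"
proof -
  let ?t = "\<lambda>l k. Q ^ (k * (k - l)) * c l * gauss_binom Q (n - l) (k - l) * gauss_binom Q m k"
  have upper: "{l..n} = {k \<in> {..n}. l \<le> k}" for l
    by auto
  have lower: "{..k} = {l \<in> {..n}. l \<le> k}" if "k \<le> n" for k
    using that by auto
  have "(\<Sum>l\<le>n. c l * gauss_binom Q (m + n - l) n) = (\<Sum>l\<le>n. \<Sum>k\<in>{k \<in> {..n}. l \<le> k}. ?t l k)"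
    by (intro sum.cong refl)
      (simp add: gauss_binom_vandermonde_shifted upper sum_distrib_left ac_simps)
  also have "\<dots> = (\<Sum>k\<le>n. \<Sum>l\<in>{l \<in> {..n}. l \<le> k}. ?t l k)"
    by (rule sum.swap_restrict) simp_all
  also have "\<dots> = (\<Sum>k\<le>n. (\<Sum>l\<le>k. Q ^ (k * (k - l)) * c l * gauss_binom Q (n - l) (k - l))
      * gauss_binom Q m k)"
  proof (rule sum.cong[OF refl])
    fix k assume "k \<in> {..n}"
    then have "k \<le> n"
      by simp
    then show "(\<Sum>l\<in>{l \<in> {..n}. l \<le> k}. ?t l k)
        = (\<Sum>l\<le>k. Q ^ (k * (k - l)) * c l * gauss_binom Q (n - l) (k - l)) * gauss_binom Q m k"
      by (simp only: lower[symmetric] sum_distrib_right)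
  qed
  finally show ?thesis .
qed

lemma gauss_binom_coeffs_unique:
  fixes F G :: "nat \<Rightarrow> 'a::comm_ring_1"
  assumes "\<And>m. (\<Sum>k\<le>n. F k * gauss_binom Q m k) = (\<Sum>k\<le>n. G k * gauss_binom Q m k)"
  shows "k \<le> n \<Longrightarrow> F k = G k"
proof (induction k rule: less_induct)
  case (less k)
  have "(\<Sum>j\<le>n. H j * gauss_binom Q k j) = H k + (\<Sum>j<k. H j * gauss_binom Q k j)" for H
  proof -
    have "(\<Sum>j\<le>n. H j * gauss_binom Q k j) = (\<Sum>j\<le>k. H j * gauss_binom Q k j)"
      using less.prems by (intro sum.mono_neutral_right) (auto simp: gauss_binom_eq_0)
    then show ?thesis by (simp add: lessThan_Suc_atMost[symmetric])
  qed
  moreover have "(\<Sum>j<k. F j * gauss_binom Q k j) = (\<Sum>j<k. G j * gauss_binom Q k j)"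
    using less by (intro sum.cong) auto
  ultimately show ?case
    using assms[of k] by simp
qed

lemma qint_qX_power_nonzero: "0 < i \<Longrightarrow> qint (qX ^ r) i \<noteq> 0"
proof
  assume "0 < i" "qint (qX ^ r) i = 0"
  moreover have "poly (qint (qX ^ r) i) 1 = int i"
    by (simp add: qint_def poly_sum)
  ultimately show False
    by simp
qed

lemma qfact_qX_power_nonzero: "qfact (qX ^ r) k \<noteq> 0"
  unfolding qfact_def by (subst prod_zero_iff) (auto simp: qint_qX_power_nonzero)

section \<open>Expansion by colored q-Stirling numbers\<close>

lemma Scol_eq_0: "n < k \<Longrightarrow> Scol r n k = 0"
  by (induction r n k rule: Scol.induct) auto

lemma Scol_Suc:
  "Scol r (Suc n) k = (if k = 0 then 0 else Scol r n (k - 1)) + qint qX (r * k + 1) * Scol r n k"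
  by (cases k) simp_all

lemma power_eq_sum_Scol:
  fixes t :: "int poly"
  shows "t ^ n = (\<Sum>k\<le>n. Scol r n k * (\<Prod>i<k. t - qint qX (r * i + 1)))"
proof (induction n)
  case (Suc n)
  define P where "P k = (\<Prod>i<k. t - qint qX (r * i + 1))" for k
  have shifted: "(\<Sum>k\<le>Suc n. (if k = 0 then 0 else Scol r n (k - 1)) * P k)
      = (\<Sum>k\<le>n. Scol r n k * P (Suc k))"
    by (simp only: sum.atMost_Suc_shift) simp
  have "(\<Sum>k\<le>Suc n. Scol r (Suc n) k * P k)
      = (\<Sum>k\<le>n. Scol r n k * P (Suc k)) + (\<Sum>k\<le>n. qint qX (r * k + 1) * Scol r n k * P k)"
    unfolding Scol_Suc distrib_right sum.distrib shifted by (simp add: Scol_eq_0)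
  also have "\<dots> = (\<Sum>k\<le>n. t * (Scol r n k * P k))"
    by (simp add: P_def sum.distrib[symmetric] algebra_simps)
  also have "\<dots> = t ^ Suc n"
    by (simp add: Suc P_def sum_distrib_left)
  finally show ?case
    by (simp add: P_def)
qed simp

lemma sum_lessThan_affine: "(\<Sum>i<k. r * i + 1) = r * (k choose 2) + (k::nat)"
proof (induction k)
  case (Suc k)
  then show ?case
    using binomial_Suc_Suc[of k 1] by (simp add: numeral_2_eq_2 algebra_simps)
qed simp

lemma prod_qint_diff:
  "(\<Prod>i<k. qint Q (r * m + 1) - qint Q (r * i + 1))
     = Q ^ (r * (k choose 2) + k) * qint Q r ^ k * qfact (Q ^ r) k * gauss_binom (Q ^ r) m k"
proof (cases "k \<le> m")
  case True
  have "qint Q (r * m + 1) - qint Q (r * i + 1) = Q ^ (r * i + 1) * qint Q r * qint (Q ^ r) (m - i)"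
    if "i < k" for i
  proof -
    have "r * m + 1 = (r * i + 1) + r * (m - i)"
      using that True by (simp add: algebra_simps diff_mult_distrib2)
    then show ?thesis
      by (simp only: qint_add qint_mult) (simp add: algebra_simps)
  qed
  then have "(\<Prod>i<k. qint Q (r * m + 1) - qint Q (r * i + 1))
      = Q ^ (\<Sum>i<k. r * i + 1) * qint Q r ^ k * (\<Prod>i<k. qint (Q ^ r) (m - i))"
    by (simp add: prod.distrib power_sum)
  then show ?thesis
    by (simp only: sum_lessThan_affine prod_qint_falling mult.assoc)
next
  case False
  then have "(\<Prod>i<k. qint Q (r * m + 1) - qint Q (r * i + 1)) = 0"
    by (intro prod_zero) (auto intro!: bexI[of _ m])
  then show ?thesis
    using False by (simp add: gauss_binom_eq_0)
qed

lemma power_qint_eq_sum_Scol_gauss_binom: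
  "qint qX (r * m + 1) ^ n = (\<Sum>k\<le>n. (qX ^ (r * (k choose 2) + k) * qint qX r ^ k
      * qfact (qX ^ r) k * Scol r n k) * gauss_binom (qX ^ r) m k)"
  unfolding power_eq_sum_Scol[of "qint qX (r * m + 1)" n r] prod_qint_diff
  by (simp add: ac_simps)

section \<open>Weakly decreasing sequences\<close>

definition decreasing_seqs :: "nat \<Rightarrow> nat \<Rightarrow> (nat \<Rightarrow> nat) set" where
  "decreasing_seqs n h = {\<mu>. (\<forall>j. \<mu> j \<le> h) \<and> (\<forall>j. 1 \<le> j \<longrightarrow> j < n \<longrightarrow> \<mu> (Suc j) \<le> \<mu> j)
      \<and> (\<forall>j. j \<notin> {1..n} \<longrightarrow> \<mu> j = 0)}"

lemma finite_decreasing_seqs: "finite (decreasing_seqs n h)"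
proof (rule finite_subset)
  show "decreasing_seqs n h
      \<subseteq> {\<mu>. \<forall>j. (j \<in> {1..n} \<longrightarrow> \<mu> j \<in> {0..h}) \<and> (j \<notin> {1..n} \<longrightarrow> \<mu> j = 0)}"
    unfolding decreasing_seqs_def by auto
qed (rule finite_set_of_finite_funs; simp)

lemma decreasing_seqsI:
  assumes "\<And>j. \<mu> j \<le> h" and "\<And>j. 1 \<le> j \<Longrightarrow> j < n \<Longrightarrow> \<mu> (Suc j) \<le> \<mu> j"
    and "\<And>j. j \<notin> {1..n} \<Longrightarrow> \<mu> j = 0"
  shows "\<mu> \<in> decreasing_seqs n h"
  using assms by (simp add: decreasing_seqs_def)

lemma decreasing_seqsD:
  assumes "\<mu> \<in> decreasing_seqs n h"
  shows "\<mu> j \<le> h" and "1 \<le> j \<Longrightarrow> j < n \<Longrightarrow> \<mu> (Suc j) \<le> \<mu> j"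
    and "j \<notin> {1..n} \<Longrightarrow> \<mu> j = 0"
  using assms by (simp_all add: decreasing_seqs_def)

lemma decreasing_seqs_antimono:
  assumes "\<mu> \<in> decreasing_seqs n h" and "1 \<le> i" "i \<le> j" "j \<le> n"
  shows "\<mu> j \<le> \<mu> i"
proof (rule lift_Suc_antimono_le_ivl[where N = "{1..<n}" and f = \<mu>])
  show "\<mu> (Suc k) \<le> \<mu> k" if "k \<in> {1..<n}" for k
    using that decreasing_seqsD(2)[OF assms(1)] by simp
qed (use assms in auto)

definition seq_cons :: "nat \<Rightarrow> (nat \<Rightarrow> nat) \<Rightarrow> nat \<Rightarrow> nat" where
  "seq_cons t \<nu> j = (if j = 0 then 0 else if j = 1 then t else \<nu> (j - 1))"

definition seq_tail :: "(nat \<Rightarrow> nat) \<Rightarrow> nat \<Rightarrow> nat" where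
  "seq_tail \<mu> j = (if j = 0 then 0 else \<mu> (Suc j))"

lemma bij_betw_decreasing_seqs_Suc:
  "bij_betw (\<lambda>\<mu>. (\<mu> 1, seq_tail \<mu>)) (decreasing_seqs (Suc n) h) (Sigma {..h} (decreasing_seqs n))"
proof -
  have tail: "\<mu> 1 \<le> h \<and> seq_tail \<mu> \<in> decreasing_seqs n (\<mu> 1)"
    if \<mu>: "\<mu> \<in> decreasing_seqs (Suc n) h" for \<mu>
  proof -
    note \<mu>D = decreasing_seqsD[OF \<mu>]
    have "\<mu> (Suc j) \<le> \<mu> 1" for j
      using decreasing_seqs_antimono[OF \<mu>, of 1 "Suc j"] \<mu>D(3)[of "Suc j"]
      by (cases "Suc j \<le> Suc n") auto
    then have "seq_tail \<mu> \<in> decreasing_seqs n (\<mu> 1)"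
      by (intro decreasing_seqsI) (auto simp: seq_tail_def \<mu>D(2) \<mu>D(3))
    then show ?thesis
      using \<mu>D(1)[of 1] by simp
  qed
  have cons: "seq_cons t \<nu> \<in> decreasing_seqs (Suc n) h"
    if t: "t \<le> h" and \<nu>: "\<nu> \<in> decreasing_seqs n t" for t \<nu>
  proof (rule decreasing_seqsI)
    note \<nu>D = decreasing_seqsD[OF \<nu>]
    fix j
    show "seq_cons t \<nu> j \<le> h"
      using t le_trans[OF \<nu>D(1) t] by (simp add: seq_cons_def)
    show "seq_cons t \<nu> (Suc j) \<le> seq_cons t \<nu> j" if "1 \<le> j" "j < Suc n"
      using that \<nu>D(1)[of 1] \<nu>D(2)[of "j - 1"] by (simp add: seq_cons_def)
    show "seq_cons t \<nu> j = 0" if "j \<notin> {1..Suc n}"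
    proof (cases "j = 0")
      case False
      then have "j - 1 \<notin> {1..n}" "j \<noteq> 1"
        using that by auto
      then show ?thesis
        using \<nu>D(3) by (simp add: seq_cons_def)
    qed (simp add: seq_cons_def)
  qed
  have left: "seq_cons (\<mu> 1) (seq_tail \<mu>) = \<mu>" if "\<mu> \<in> decreasing_seqs (Suc n) h" for \<mu>
  proof
    fix j
    show "seq_cons (\<mu> 1) (seq_tail \<mu>) j = \<mu> j"
      using decreasing_seqsD(3)[OF that, of 0]
      by (cases j) (simp_all add: seq_cons_def seq_tail_def)
  qed
  have right: "seq_tail (seq_cons t \<nu>) = \<nu>" if "\<nu> \<in> decreasing_seqs n t" for t \<nu>
    using decreasing_seqsD(3)[OF that, of 0] by (auto simp: seq_cons_def seq_tail_def)
  show ?thesis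
    by (rule bij_betw_byWitness[where f' = "\<lambda>(t, \<nu>). seq_cons t \<nu>"])
      (auto simp: left right tail cons seq_cons_def simp del: One_nat_def)
qed

lemma sum_decreasing_seqs:
  "(\<Sum>\<mu>\<in>decreasing_seqs n h. Q ^ (\<Sum>j=1..n. \<mu> j)) = gauss_binom Q (h + n) n"
proof (induction n arbitrary: h)
  case 0
  have "decreasing_seqs 0 h = {\<lambda>_. 0}"
    by (auto simp: decreasing_seqs_def)
  then show ?case by simp
next
  case (Suc n)
  have "(\<Sum>j=1..Suc n. \<mu> j) = \<mu> 1 + (\<Sum>j=1..n. seq_tail \<mu> j)" for \<mu>
  proof -
    have "(\<Sum>j=1..Suc n. \<mu> j) = \<mu> 1 + (\<Sum>j=Suc 1..Suc n. \<mu> j)"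
      by (rule sum.atLeast_Suc_atMost) simp
    then show ?thesis
      by (simp only: sum.shift_bounds_cl_Suc_ivl) (simp add: seq_tail_def)
  qed
  then have "(\<Sum>\<mu>\<in>decreasing_seqs (Suc n) h. Q ^ (\<Sum>j=1..Suc n. \<mu> j))
      = (\<Sum>\<mu>\<in>decreasing_seqs (Suc n) h. (\<lambda>(t, \<nu>). Q ^ (t + (\<Sum>j=1..n. \<nu> j))) (\<mu> 1, seq_tail \<mu>))"
    by simp
  also have "\<dots> = (\<Sum>(t, \<nu>)\<in>Sigma {..h} (decreasing_seqs n). Q ^ (t + (\<Sum>j=1..n. \<nu> j)))"
    by (rule sum.reindex_bij_betw[OF bij_betw_decreasing_seqs_Suc])
  also have "\<dots> = (\<Sum>t\<le>h. Q ^ t * (\<Sum>\<nu>\<in>decreasing_seqs n t. Q ^ (\<Sum>j=1..n. \<nu> j)))"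
    by (subst sum.Sigma[symmetric])
      (simp_all add: finite_decreasing_seqs power_add sum_distrib_left)
  also have "\<dots> = gauss_binom Q (h + Suc n) (Suc n)"
    by (simp only: Suc.IH gauss_binom_hockey_stick)
  finally show ?case .
qed

section \<open>Sorting by rank\<close>

definition rank_perm :: "(nat \<Rightarrow> 'b::linorder) \<Rightarrow> nat \<Rightarrow> nat \<Rightarrow> nat" where
  "rank_perm K n a = (if a \<in> {1..n} then Suc (card {b \<in> {1..n}. K b < K a}) else a)"

lemma rank_perm_less_iff:
  assumes "a \<in> {1..n}" "b \<in> {1..n}"
  shows "rank_perm K n a < rank_perm K n b \<longleftrightarrow> K a < K b"
proof
  assume "K a < K b"
  then have "{c \<in> {1..n}. K c < K a} \<subset> {c \<in> {1..n}. K c < K b}"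
    using assms by auto
  then show "rank_perm K n a < rank_perm K n b"
    using assms by (simp add: rank_perm_def psubset_card_mono)
next
  assume less: "rank_perm K n a < rank_perm K n b"
  show "K a < K b"
  proof (rule ccontr)
    assume "\<not> K a < K b"
    then have "{c \<in> {1..n}. K c < K b} \<subseteq> {c \<in> {1..n}. K c < K a}"
      by auto
    then have "card {c \<in> {1..n}. K c < K b} \<le> card {c \<in> {1..n}. K c < K a}"
      by (intro card_mono) auto
    then show False
      using less assms by (simp add: rank_perm_def)
  qed
qed

lemma rank_perm_permutes:
  assumes "inj_on K {1..n}"
  shows "rank_perm K n permutes {1..n}"
proof (rule bij_imp_permutes)
  have "inj_on (rank_perm K n) {1..n}"
  proof (rule inj_onI)
    fix a b assume ab: "a \<in> {1..n}" "b \<in> {1..n}" "rank_perm K n a = rank_perm K n b"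
    show "a = b"
    proof (rule ccontr)
      assume "a \<noteq> b"
      then have "K a \<noteq> K b"
        using inj_onD[OF assms _ ab(1,2)] by blast
      then have "K a < K b \<or> K b < K a"
        by (simp add: neq_iff)
      then show False
        using rank_perm_less_iff[OF ab(1,2), of K] rank_perm_less_iff[OF ab(2,1), of K] ab(3)
        by auto
    qed
  qed
  moreover have "rank_perm K n a \<in> {1..n}" if a: "a \<in> {1..n}" for a
  proof -
    have "card {b \<in> {1..n}. K b < K a} \<le> card ({1..n} - {a})"
      by (intro card_mono) auto
    then show ?thesis
      using a by (simp add: rank_perm_def) linarith
  qed
  ultimately show "bij_betw (rank_perm K n) {1..n} {1..n}"
    unfolding bij_betw_def by (meson endo_inj_surj finite_atLeastAtMost image_subsetI)
qed (auto simp: rank_perm_def)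

lemma strict_mono_on_inv_rank_perm:
  assumes "inj_on K {1..n}"
  shows "strict_mono_on {1..n} (\<lambda>j. K (inv (rank_perm K n) j))"
proof (rule strict_mono_onI)
  note perm = rank_perm_permutes[OF assms]
  fix i j :: nat assume "i \<in> {1..n}" "j \<in> {1..n}" "i < j"
  then show "K (inv (rank_perm K n) i) < K (inv (rank_perm K n) j)"
    using rank_perm_less_iff[of "inv (rank_perm K n) i" n "inv (rank_perm K n) j" K]
      permutes_inverses(1)[OF perm] permutes_in_image[OF permutes_inv[OF perm]] by simp
qed

lemma rank_perm_eq_inv:
  assumes perm: "\<sigma> permutes {1..n}" and sorted: "strict_mono_on {1..n} (\<lambda>j. K (\<sigma> j))"
  shows "rank_perm K n = inv \<sigma>"
proof -
  have rank_\<sigma>: "rank_perm K n (\<sigma> j) = j" if j: "j \<in> {1..n}" for j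
  proof -
    have "{b \<in> {1..n}. K b < K (\<sigma> j)} = {b \<in> \<sigma> ` {1..n}. K b < K (\<sigma> j)}"
      by (simp only: permutes_image[OF perm])
    also have "\<dots> = \<sigma> ` {i \<in> {1..n}. K (\<sigma> i) < K (\<sigma> j)}"
      by blast
    also have "{i \<in> {1..n}. K (\<sigma> i) < K (\<sigma> j)} = {1..<j}"
    proof -
      have "\<forall>i\<in>{1..n}. K (\<sigma> i) < K (\<sigma> j) \<longleftrightarrow> i < j"
        using strict_mono_on_less[OF sorted _ j] by blast
      then show ?thesis
        using j by auto
    qed
    finally show ?thesis
      using j permutes_in_image[OF perm] permutes_inj_on[OF perm]
      by (simp add: rank_perm_def card_image inj_on_subset)
  qed
  show ?thesis
  proof
    fix a
    show "rank_perm K n a = inv \<sigma> a"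
    proof (cases "a \<in> {1..n}")
      case True
      then show ?thesis
        using rank_\<sigma>[of "inv \<sigma> a"] permutes_inverses(1)[OF perm]
          permutes_in_image[OF permutes_inv[OF perm]] by simp
    next
      case False
      then show ?thesis
        unfolding rank_perm_def if_not_P[OF False]
        by (simp add: permutes_not_in[OF permutes_inv[OF perm] False])
    qed
  qed
qed

section \<open>Descents of colored permutations\<close>

definition letter_key :: "nat \<times> nat \<Rightarrow> int \<times> int \<times> int" where
  "letter_key x = (if snd x = 0 then (1, int (fst x), 0) else (0, - int (fst x), - int (snd x)))"

lemma colored_less_iff_letter_key: "colored_less x y \<longleftrightarrow> letter_key x < letter_key y"
  by (cases x; cases y) (auto simp: colored_less_def letter_key_def less_prod_def)

lemma inj_letter_key: "inj letter_key"
  by (rule injI) (auto simp: letter_key_def prod_eq_iff split: if_splits)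

lemma Des_r_subset: "Des_r n p \<subseteq> {0..<n}"
  by (auto simp: Des_r_def split: prod.splits)

lemma finite_Des_r [simp]: "finite (Des_r n p)"
  using Des_r_subset finite_subset by blast

lemma des_r_le: "des_r n p \<le> n"
  unfolding des_r_def using card_mono[OF _ Des_r_subset] by fastforce

lemma mem_Des_r_iff: "i \<in> Des_r n (\<sigma>, z) \<longleftrightarrow> i < n \<and> colored_less (\<sigma> (Suc i), z (Suc i)) (\<sigma> i, z i)"
  by (simp add: Des_r_def)

definition descents_from :: "nat \<Rightarrow> (nat \<Rightarrow> nat) \<times> (nat \<Rightarrow> nat) \<Rightarrow> nat \<Rightarrow> nat" where
  "descents_from n p j = card {i \<in> Des_r n p. j \<le> i}"

lemma descents_from_0: "descents_from n p 0 = des_r n p"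
  by (simp add: descents_from_def des_r_def)

lemma descents_from_eq_0: "n \<le> j \<Longrightarrow> descents_from n p j = 0"
proof -
  assume "n \<le> j"
  then have "{i \<in> Des_r n p. j \<le> i} = {}"
    using Des_r_subset[of n p] by auto
  then show ?thesis
    by (simp add: descents_from_def)
qed

lemma descents_from_Suc:
  "descents_from n p j = (if j \<in> Des_r n p then 1 else 0) + descents_from n p (Suc j)"
proof (cases "j \<in> Des_r n p")
  case True
  then have "{i \<in> Des_r n p. j \<le> i} = insert j {i \<in> Des_r n p. Suc j \<le> i}"
    by (auto simp: Suc_le_eq le_less)
  then show ?thesis
    using True by (simp add: descents_from_def)
next
  case False
  then have "{i \<in> Des_r n p. j \<le> i} = {i \<in> Des_r n p. Suc j \<le> i}"
    by (auto simp: Suc_le_eq le_less)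
  then show ?thesis
    using False by (simp add: descents_from_def)
qed

lemma descents_from_le_des_r: "descents_from n p j \<le> des_r n p"
  unfolding descents_from_def des_r_def by (rule card_mono) auto

lemma descents_from_less_des_r: "i < j \<Longrightarrow> i \<in> Des_r n p \<Longrightarrow> descents_from n p j < des_r n p"
proof -
  assume "i < j" "i \<in> Des_r n p"
  then have "{k \<in> Des_r n p. j \<le> k} \<subset> Des_r n p"
    by (blast dest: leD)
  then show ?thesis
    unfolding descents_from_def des_r_def by (simp add: psubset_card_mono)
qed

lemma sum_descents_from: "(\<Sum>j=1..n. descents_from n p j) = (\<Sum>i\<in>Des_r n p. i)"
proof -
  have "(\<Sum>j=1..n. descents_from n p j) = (\<Sum>j=1..n. \<Sum>i\<in>Des_r n p. if j \<le> i then 1 else 0)"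
    by (simp add: descents_from_def sum.inter_filter[symmetric])
  also have "\<dots> = (\<Sum>i\<in>Des_r n p. card {j \<in> {1..n}. j \<le> i})"
    by (subst sum.swap) (simp add: sum.inter_filter[symmetric])
  also have "\<dots> = (\<Sum>i\<in>Des_r n p. i)"
  proof (rule sum.cong)
    fix i assume "i \<in> Des_r n p"
    then have "{j \<in> {1..n}. j \<le> i} = {1..i}"
      using Des_r_subset[of n p] by auto
    then show "card {j \<in> {1..n}. j \<le> i} = i" by simp
  qed simp
  finally show ?thesis .
qed

lemma colored_permsD:
  assumes "(\<sigma>, z) \<in> colored_perms r n"
  shows "\<sigma> permutes {1..n}" and "i \<in> {1..n} \<Longrightarrow> z i < r" and "i \<notin> {1..n} \<Longrightarrow> z i = 0"
  using assms by (auto simp: colored_perms_def)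

lemma finite_colored_perms: "finite (colored_perms r n)"
proof (rule finite_subset)
  show "colored_perms r n \<subseteq> {\<sigma>. \<sigma> permutes {1..n}}
      \<times> {z. \<forall>i. (i \<in> {1..n} \<longrightarrow> z i \<in> {..<r}) \<and> (i \<notin> {1..n} \<longrightarrow> z i = 0)}"
    by (auto simp: colored_perms_def)
qed (intro finite_cartesian_product finite_permutations finite_set_of_finite_funs; simp)

lemma colored_perm_descent_before:
  assumes "(\<sigma>, z) \<in> colored_perms r n" and "j \<le> n" and "0 < z j"
  shows "\<exists>i<j. i \<in> Des_r n (\<sigma>, z)"
  using assms(2,3)
proof (induction j)
  case 0
  then show ?case using colored_permsD(3)[OF assms(1), of 0] by simp
next
  case (Suc j)
  show ?case
  proof (cases "0 < z j")
    case True
    then show ?thesis using Suc by (auto intro: less_SucI)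
  next
    case False
    then have "j \<in> Des_r n (\<sigma>, z)"
      using Suc.prems by (auto simp: mem_Des_r_iff colored_less_def)
    then show ?thesis by blast
  qed
qed

lemma zero_mem_Des_r_iff:
  assumes "(\<sigma>, z) \<in> colored_perms r n" and "0 < n"
  shows "0 \<in> Des_r n (\<sigma>, z) \<longleftrightarrow> 0 < z 1"
  using assms colored_permsD(3)[OF assms(1), of 0]
    permutes_not_in[OF colored_permsD(1)[OF assms(1)], of 0]
  by (auto simp: mem_Des_r_iff colored_less_def)

lemma letter_key_less_of_not_Des:
  assumes P: "(\<sigma>, z) \<in> colored_perms r n" and "j < n" and "j \<notin> Des_r n (\<sigma>, z)"
  shows "letter_key (\<sigma> j, z j) < letter_key (\<sigma> (Suc j), z (Suc j))"
proof -
  have "\<sigma> j \<noteq> \<sigma> (Suc j)"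
    using permutes_inj[OF colored_permsD(1)[OF P]] by (simp add: inj_eq)
  then have "letter_key (\<sigma> j, z j) \<noteq> letter_key (\<sigma> (Suc j), z (Suc j))"
    by (simp add: inj_eq[OF inj_letter_key])
  moreover have "\<not> letter_key (\<sigma> (Suc j), z (Suc j)) < letter_key (\<sigma> j, z j)"
    using assms(2,3) by (simp add: mem_Des_r_iff colored_less_iff_letter_key)
  ultimately show ?thesis
    by (simp add: neq_iff)
qed

section \<open>The colored Worpitzky identity\<close>

definition marked_colored_perms ::
    "nat \<Rightarrow> nat \<Rightarrow> nat \<Rightarrow> (((nat \<Rightarrow> nat) \<times> (nat \<Rightarrow> nat)) \<times> (nat \<Rightarrow> nat)) set" where
  "marked_colored_perms r n m =
     (SIGMA p:{p \<in> colored_perms r n. des_r n p \<le> m}. decreasing_seqs n (m - des_r n p))"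

definition marked_to_word ::
    "nat \<Rightarrow> nat \<Rightarrow> ((nat \<Rightarrow> nat) \<times> (nat \<Rightarrow> nat)) \<times> (nat \<Rightarrow> nat) \<Rightarrow> nat \<Rightarrow> nat" where
  "marked_to_word r n x = (case x of ((\<sigma>, z), \<mu>) \<Rightarrow>
     \<lambda>a\<in>{1..n}. r * (descents_from n (\<sigma>, z) (inv \<sigma> a) + \<mu> (inv \<sigma> a)) + z (inv \<sigma> a))"

lemma marked_to_word_apply:
  assumes "\<sigma> permutes {1..n}" and "j \<in> {1..n}"
  shows "marked_to_word r n ((\<sigma>, z), \<mu>) (\<sigma> j) = r * (descents_from n (\<sigma>, z) j + \<mu> j) + z j"
  using assms permutes_in_image[OF assms(1)] permutes_inverses(2)[OF assms(1)]
  by (simp add: marked_to_word_def)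

lemma marked_to_word_extensional: "marked_to_word r n x \<in> extensional {1..n}"
  by (simp add: marked_to_word_def split: prod.split)

lemma marked_to_word_le:
  assumes x: "((\<sigma>, z), \<mu>) \<in> marked_colored_perms r n m" and j: "j \<in> {1..n}"
  shows "r * (descents_from n (\<sigma>, z) j + \<mu> j) + z j \<le> r * m"
proof -
  have P: "(\<sigma>, z) \<in> colored_perms r n" and des: "des_r n (\<sigma>, z) \<le> m"
    and \<mu>: "\<mu> j \<le> m - des_r n (\<sigma>, z)"
    using x by (auto simp: marked_colored_perms_def decreasing_seqs_def)
  show ?thesis
  proof (cases "z j = 0")
    case True
    have "descents_from n (\<sigma>, z) j + \<mu> j \<le> m"
      using descents_from_le_des_r[of n "(\<sigma>, z)" j] des \<mu> by linarith
    then show ?thesis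
      using True by simp
  next
    case False
    then obtain i where "i < j" "i \<in> Des_r n (\<sigma>, z)"
      using colored_perm_descent_before[OF P, of j] j by auto
    then have "descents_from n (\<sigma>, z) j + \<mu> j + 1 \<le> m"
      using descents_from_less_des_r[of i j n "(\<sigma>, z)"] des \<mu> by linarith
    then have "r * (descents_from n (\<sigma>, z) j + \<mu> j) + r \<le> r * m"
      by (metis add_mult_distrib2 mult.right_neutral mult_le_mono2)
    then show ?thesis
      using colored_permsD(2)[OF P j] by linarith
  qed
qed

lemma marked_to_word_in:
  assumes x: "x \<in> marked_colored_perms r n m"
  shows "marked_to_word r n x \<in> {1..n} \<rightarrow>\<^sub>E {0..r * m}"
proof -
  obtain \<sigma> z \<mu> where xe: "x = ((\<sigma>, z), \<mu>)"
    by (metis prod.collapse)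
  have perm: "\<sigma> permutes {1..n}"
    using x colored_permsD(1) by (auto simp: xe marked_colored_perms_def)
  have "marked_to_word r n x (\<sigma> j) \<le> r * m" if "j \<in> {1..n}" for j
    using marked_to_word_apply[OF perm that] marked_to_word_le[OF x[unfolded xe] that] xe by simp
  moreover have "a \<in> \<sigma> ` {1..n}" if "a \<in> {1..n}" for a
    using that by (simp only: permutes_image[OF perm])
  ultimately have "marked_to_word r n x a \<le> r * m" if "a \<in> {1..n}" for a
    using that by blast
  then show ?thesis
    unfolding xe marked_to_word_def by (simp add: restrict_PiE_iff)
qed

lemma sum_marked_to_word:
  assumes "\<sigma> permutes {1..n}"
  shows "(\<Sum>a\<in>{1..n}. marked_to_word r n ((\<sigma>, z), \<mu>) a) = fmaj_r r n (\<sigma>, z) + r * (\<Sum>j=1..n. \<mu> j)"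
proof -
  have "(\<Sum>a\<in>{1..n}. marked_to_word r n ((\<sigma>, z), \<mu>) a)
      = (\<Sum>j\<in>{1..n}. marked_to_word r n ((\<sigma>, z), \<mu>) (\<sigma> j))"
    using sum.permute[OF assms] by (simp add: comp_def)
  also have "\<dots> = (\<Sum>j=1..n. r * (descents_from n (\<sigma>, z) j + \<mu> j) + z j)"
    using marked_to_word_apply[OF assms] by simp
  also have "\<dots> = r * (\<Sum>j=1..n. descents_from n (\<sigma>, z) j) + r * (\<Sum>j=1..n. \<mu> j) + (\<Sum>j=1..n. z j)"
    by (simp add: sum.distrib sum_distrib_left algebra_simps)
  also have "\<dots> = fmaj_r r n (\<sigma>, z) + r * (\<Sum>j=1..n. \<mu> j)"
    unfolding fmaj_r_def sum_descents_from by simp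
  finally show ?thesis .
qed

lemma marked_to_word_div_mod:
  assumes x: "((\<sigma>, z), \<mu>) \<in> marked_colored_perms r n m" and j: "j \<in> {1..n}"
  shows "marked_to_word r n ((\<sigma>, z), \<mu>) (\<sigma> j) div r = descents_from n (\<sigma>, z) j + \<mu> j"
    and "marked_to_word r n ((\<sigma>, z), \<mu>) (\<sigma> j) mod r = z j"
proof -
  have P: "(\<sigma>, z) \<in> colored_perms r n"
    using x by (simp add: marked_colored_perms_def)
  have "z j < r"
    using colored_permsD(2)[OF P j] .
  then show "marked_to_word r n ((\<sigma>, z), \<mu>) (\<sigma> j) div r = descents_from n (\<sigma>, z) j + \<mu> j"
    and "marked_to_word r n ((\<sigma>, z), \<mu>) (\<sigma> j) mod r = z j"
    using marked_to_word_apply[OF colored_permsD(1)[OF P] j] by simp_all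
qed

definition word_key :: "nat \<Rightarrow> (nat \<Rightarrow> nat) \<Rightarrow> nat \<Rightarrow> int \<times> int \<times> int \<times> int" where
  "word_key r w a = (- int (w a div r), letter_key (a, w a mod r))"

lemma inj_word_key: "inj (word_key r w)"
  using inj_letter_key by (auto simp: word_key_def inj_def)

lemma marked_to_word_key_less:
  assumes x: "((\<sigma>, z), \<mu>) \<in> marked_colored_perms r n m" and j: "j \<in> {1..<n}"
  defines "w \<equiv> marked_to_word r n ((\<sigma>, z), \<mu>)"
  shows "word_key r w (\<sigma> j) < word_key r w (\<sigma> (Suc j))"
proof -
  have P: "(\<sigma>, z) \<in> colored_perms r n" and \<mu>: "\<mu> \<in> decreasing_seqs n (m - des_r n (\<sigma>, z))"
    using x by (auto simp: marked_colored_perms_def)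
  let ?b = "\<lambda>j. descents_from n (\<sigma>, z) j + \<mu> j"
  have key: "word_key r w (\<sigma> i) = (- int (?b i), letter_key (\<sigma> i, z i))" if "i \<in> {1..n}" for i
    using marked_to_word_div_mod[OF x that] by (simp add: word_key_def w_def)
  have j1: "j \<in> {1..n}" "Suc j \<in> {1..n}"
    using j by auto
  have dec: "?b (Suc j) + (if j \<in> Des_r n (\<sigma>, z) then 1 else 0) \<le> ?b j"
    using descents_from_Suc[of n "(\<sigma>, z)" j] decreasing_seqsD(2)[OF \<mu>, of j] j by simp
  show ?thesis
  proof (cases "j \<in> Des_r n (\<sigma>, z)")
    case True
    then show ?thesis
      unfolding key[OF j1(1)] key[OF j1(2)] using dec by (simp add: less_prod_def)
  next
    case False
    then show ?thesis
      unfolding key[OF j1(1)] key[OF j1(2)]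
      using dec letter_key_less_of_not_Des[OF P _ False] j by (auto simp: less_prod_def)
  qed
qed

lemma marked_to_word_sorted:
  assumes x: "((\<sigma>, z), \<mu>) \<in> marked_colored_perms r n m"
  shows "strict_mono_on {1..n} (\<lambda>j. word_key r (marked_to_word r n ((\<sigma>, z), \<mu>)) (\<sigma> j))"
proof (rule strict_mono_onI)
  let ?f = "\<lambda>j. word_key r (marked_to_word r n ((\<sigma>, z), \<mu>)) (\<sigma> j)"
  fix i j :: nat assume "i \<in> {1..n}" "j \<in> {1..n}" "i < j"
  then show "?f i < ?f j"
    using lift_Suc_mono_less_ivl[where N = "{1..<n}" and f = ?f, OF marked_to_word_key_less[OF x]]
    by auto
qed

definition word_perm :: "nat \<Rightarrow> nat \<Rightarrow> (nat \<Rightarrow> nat) \<Rightarrow> nat \<Rightarrow> nat" where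
  "word_perm r n w = inv (rank_perm (word_key r w) n)"

definition word_coloring :: "nat \<Rightarrow> nat \<Rightarrow> (nat \<Rightarrow> nat) \<Rightarrow> nat \<Rightarrow> nat" where
  "word_coloring r n w j = (if j \<in> {1..n} then w (word_perm r n w j) mod r else 0)"

definition word_to_marked ::
    "nat \<Rightarrow> nat \<Rightarrow> (nat \<Rightarrow> nat) \<Rightarrow> ((nat \<Rightarrow> nat) \<times> (nat \<Rightarrow> nat)) \<times> (nat \<Rightarrow> nat)" where
  "word_to_marked r n w = ((word_perm r n w, word_coloring r n w),
     \<lambda>j. if j \<in> {1..n}
         then w (word_perm r n w j) div r - descents_from n (word_perm r n w, word_coloring r n w) j
         else 0)"

lemma word_perm_permutes: "word_perm r n w permutes {1..n}"
  unfolding word_perm_def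
  by (intro permutes_inv rank_perm_permutes inj_on_subset[OF inj_word_key] subset_UNIV)

lemma word_perm_sorted: "strict_mono_on {1..n} (\<lambda>j. word_key r w (word_perm r n w j))"
  unfolding word_perm_def
  by (intro strict_mono_on_inv_rank_perm inj_on_subset[OF inj_word_key] subset_UNIV)

lemma word_colored_perm: "0 < r \<Longrightarrow> (word_perm r n w, word_coloring r n w) \<in> colored_perms r n"
  using word_perm_permutes by (auto simp: colored_perms_def word_coloring_def)

lemma word_descent_step:
  fixes r n :: nat and w :: "nat \<Rightarrow> nat"
  assumes "1 \<le> j" "j < n"
  defines "\<sigma> \<equiv> word_perm r n w" and "z \<equiv> word_coloring r n w"
  shows "w (\<sigma> (Suc j)) div r + (if j \<in> Des_r n (\<sigma>, z) then 1 else 0) \<le> w (\<sigma> j) div r"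
proof -
  have "word_key r w (\<sigma> j) < word_key r w (\<sigma> (Suc j))"
    using strict_mono_onD[OF word_perm_sorted[of n r w], of j "Suc j"] assms by simp
  moreover have "z j = w (\<sigma> j) mod r" "z (Suc j) = w (\<sigma> (Suc j)) mod r"
    using assms by (simp_all add: word_coloring_def)
  ultimately have "w (\<sigma> (Suc j)) div r < w (\<sigma> j) div r
      \<or> w (\<sigma> (Suc j)) div r = w (\<sigma> j) div r
        \<and> letter_key (\<sigma> j, z j) < letter_key (\<sigma> (Suc j), z (Suc j))"
    by (auto simp: word_key_def less_prod_def)
  moreover have "j \<in> Des_r n (\<sigma>, z) \<Longrightarrow> \<not> letter_key (\<sigma> j, z j) < letter_key (\<sigma> (Suc j), z (Suc j))"
    by (auto simp: mem_Des_r_iff colored_less_iff_letter_key dest: less_imp_not_less)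
  ultimately show ?thesis
    by auto
qed

lemma descents_from_le_word_div:
  fixes r n :: nat and w :: "nat \<Rightarrow> nat"
  assumes j: "j \<in> {1..n}"
  defines "\<sigma> \<equiv> word_perm r n w" and "z \<equiv> word_coloring r n w"
  shows "descents_from n (\<sigma>, z) j \<le> w (\<sigma> j) div r"
proof -
  have "j \<le> n" using j by simp
  then show ?thesis
  proof (induction j rule: inc_induct)
    case (step k)
    then have "descents_from n (\<sigma>, z) k
        \<le> (if k \<in> Des_r n (\<sigma>, z) then 1 else 0) + w (\<sigma> (Suc k)) div r"
      using descents_from_Suc[of n "(\<sigma>, z)" k] by simp
    also have "\<dots> \<le> w (\<sigma> k) div r"
      using word_descent_step[where j = k and n = n and r = r and w = w] step.hyps j
      by (simp add: \<sigma>_def z_def)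
    finally show ?case .
  qed (simp add: descents_from_eq_0)
qed

lemma word_first_letter_bound:
  fixes r n m :: nat and w :: "nat \<Rightarrow> nat"
  assumes r: "0 < r" and n: "0 < n" and w: "w \<in> {1..n} \<rightarrow>\<^sub>E {0..r * m}"
  defines "\<sigma> \<equiv> word_perm r n w" and "z \<equiv> word_coloring r n w"
  shows "(if 0 \<in> Des_r n (\<sigma>, z) then 1 else 0) + w (\<sigma> 1) div r \<le> m"
proof -
  have "\<sigma> 1 \<in> {1..n}"
    using n permutes_in_image[OF word_perm_permutes] by (simp add: \<sigma>_def)
  then have le: "r * (w (\<sigma> 1) div r) + z 1 \<le> r * m"
    using w n by (auto simp: z_def \<sigma>_def word_coloring_def)
  have "0 \<in> Des_r n (\<sigma>, z) \<longleftrightarrow> 0 < z 1"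
    using zero_mem_Des_r_iff[OF word_colored_perm[OF r] n] by (simp add: \<sigma>_def z_def)
  then show ?thesis
  proof (cases "0 < z 1")
    case True
    then have "r * (w (\<sigma> 1) div r) < r * m"
      using le by linarith
    then show ?thesis
      using True \<open>0 \<in> Des_r n (\<sigma>, z) \<longleftrightarrow> 0 < z 1\<close> by simp
  next
    case False
    then have "r * (w (\<sigma> 1) div r) \<le> r * m"
      using le by linarith
    then show ?thesis
      using False r \<open>0 \<in> Des_r n (\<sigma>, z) \<longleftrightarrow> 0 < z 1\<close> by simp
  qed
qed

lemma word_to_marked_in:
  assumes r: "0 < r" and w: "w \<in> {1..n} \<rightarrow>\<^sub>E {0..r * m}"
  shows "word_to_marked r n w \<in> marked_colored_perms r n m"
proof -
  define \<sigma> where "\<sigma> = word_perm r n w"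
  define z where "z = word_coloring r n w"
  define b where "b j = w (\<sigma> j) div r" for j
  define \<mu> where "\<mu> = (\<lambda>j. if j \<in> {1..n} then b j - descents_from n (\<sigma>, z) j else 0)"
  have d_le_b: "descents_from n (\<sigma>, z) j \<le> b j" if "j \<in> {1..n}" for j
    using descents_from_le_word_div[OF that] by (simp add: b_def \<sigma>_def z_def)
  have \<mu>_dec: "\<mu> (Suc j) \<le> \<mu> j" if "1 \<le> j" "j < n" for j
    using word_descent_step[where j = j and n = n and r = r and w = w] that
      descents_from_Suc[of n "(\<sigma>, z)" j] d_le_b[of "Suc j"]
    by (simp add: \<mu>_def b_def \<sigma>_def z_def)
  have first: "des_r n (\<sigma>, z) \<le> m \<and> \<mu> 1 \<le> m - des_r n (\<sigma>, z)"
  proof (cases "n = 0")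
    case True
    then show ?thesis
      using des_r_le[of n "(\<sigma>, z)"] by (simp add: \<mu>_def)
  next
    case False
    have "des_r n (\<sigma>, z) = (if 0 \<in> Des_r n (\<sigma>, z) then 1 else 0) + descents_from n (\<sigma>, z) 1"
      using descents_from_Suc[of n "(\<sigma>, z)" 0] by (simp add: descents_from_0)
    moreover have "(if 0 \<in> Des_r n (\<sigma>, z) then 1 else 0) + b 1 \<le> m"
      using word_first_letter_bound[OF r _ w] False by (simp add: b_def \<sigma>_def z_def)
    ultimately show ?thesis
      using d_le_b[of 1] False by (simp add: \<mu>_def)
  qed
  have "\<mu> \<in> decreasing_seqs n (m - des_r n (\<sigma>, z))"
  proof (rule decreasing_seqsI)
    fix j
    show "\<mu> j \<le> m - des_r n (\<sigma>, z)"
    proof (cases "j \<in> {1..n}")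
      case True
      then have "\<mu> j \<le> \<mu> 1"
        using lift_Suc_antimono_le_ivl[where N = "{1..<n}" and f = \<mu>, OF \<mu>_dec] by auto
      then show ?thesis
        using first by simp
    qed (auto simp: \<mu>_def)
  qed (simp add: \<mu>_dec, auto simp: \<mu>_def)
  moreover have "word_to_marked r n w = ((\<sigma>, z), \<mu>)"
    unfolding word_to_marked_def \<mu>_def b_def \<sigma>_def z_def by (rule refl)
  ultimately show ?thesis
    using word_colored_perm[OF r] first by (simp add: marked_colored_perms_def \<sigma>_def z_def)
qed

lemma marked_to_word_word_to_marked:
  assumes w: "w \<in> {1..n} \<rightarrow>\<^sub>E {0..r * m}"
  shows "marked_to_word r n (word_to_marked r n w) = w"
proof
  fix a
  define \<sigma> where "\<sigma> = word_perm r n w"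
  define z where "z = word_coloring r n w"
  have perm: "\<sigma> permutes {1..n}"
    unfolding \<sigma>_def by (rule word_perm_permutes)
  have eq: "word_to_marked r n w
      = ((\<sigma>, z), \<lambda>j. if j \<in> {1..n} then w (\<sigma> j) div r - descents_from n (\<sigma>, z) j else 0)"
    unfolding word_to_marked_def \<sigma>_def z_def by (rule refl)
  show "marked_to_word r n (word_to_marked r n w) a = w a"
  proof (cases "a \<in> {1..n}")
    case True
    then obtain j where j: "j \<in> {1..n}" "a = \<sigma> j"
      using permutes_image[OF perm] by blast
    have "marked_to_word r n (word_to_marked r n w) (\<sigma> j)
        = r * (descents_from n (\<sigma>, z) j + (w (\<sigma> j) div r - descents_from n (\<sigma>, z) j)) + z j"
      unfolding eq using marked_to_word_apply[OF perm j(1)] j(1) by simp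
    also have "\<dots> = r * (w (\<sigma> j) div r) + w (\<sigma> j) mod r"
      using descents_from_le_word_div[OF j(1)] j(1) by (simp add: \<sigma>_def z_def word_coloring_def)
    finally show ?thesis
      using j(2) by simp
  next
    case False
    then show ?thesis
      using PiE_arb[OF w False] extensional_arb[OF marked_to_word_extensional False] by simp
  qed
qed

lemma word_to_marked_marked_to_word:
  assumes x: "x \<in> marked_colored_perms r n m"
  shows "word_to_marked r n (marked_to_word r n x) = x"
proof -
  obtain \<sigma> z \<mu> where xe: "x = ((\<sigma>, z), \<mu>)"
    by (metis prod.collapse)
  note x' = x[unfolded xe]
  have P: "(\<sigma>, z) \<in> colored_perms r n" and \<mu>: "\<mu> \<in> decreasing_seqs n (m - des_r n (\<sigma>, z))"
    using x' by (auto simp: marked_colored_perms_def)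
  note perm = colored_permsD(1)[OF P]
  let ?w = "marked_to_word r n ((\<sigma>, z), \<mu>)"
  have \<sigma>': "word_perm r n ?w = \<sigma>"
    using rank_perm_eq_inv[OF perm marked_to_word_sorted[OF x']]
    by (simp add: word_perm_def permutes_inv_inv[OF perm])
  have z': "word_coloring r n ?w = z"
    using marked_to_word_div_mod(2)[OF x'] colored_permsD(3)[OF P]
    by (auto simp: word_coloring_def \<sigma>')
  have \<mu>': "(\<lambda>j. if j \<in> {1..n} then ?w (\<sigma> j) div r - descents_from n (\<sigma>, z) j else 0) = \<mu>"
    using marked_to_word_div_mod(1)[OF x'] decreasing_seqsD(3)[OF \<mu>] by auto
  show ?thesis
    unfolding xe word_to_marked_def \<sigma>' z' using \<mu>' by simp
qed

lemma sum_PiE_power_sum: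
  assumes "finite A"
  shows "(\<Sum>w\<in>A \<rightarrow>\<^sub>E {0..k}. Q ^ (\<Sum>a\<in>A. w a)) = qint Q (Suc k) ^ card A"
proof -
  have "(\<Sum>w\<in>A \<rightarrow>\<^sub>E {0..k}. Q ^ (\<Sum>a\<in>A. w a)) = (\<Prod>a\<in>A. \<Sum>v\<in>{0..k}. Q ^ v)"
    using assms by (subst prod_sum_PiE) (simp_all add: power_sum)
  also have "\<dots> = qint Q (Suc k) ^ card A"
    by (simp add: qint_def atLeast0AtMost lessThan_Suc_atMost)
  finally show ?thesis .
qed

lemma sum_marked_colored_perms:
  assumes "0 < r"
  shows "(\<Sum>x\<in>marked_colored_perms r n m. Q ^ (fmaj_r r n (fst x) + r * (\<Sum>j=1..n. snd x j)))
    = qint Q (r * m + 1) ^ n"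
proof -
  have "(\<Sum>x\<in>marked_colored_perms r n m. Q ^ (fmaj_r r n (fst x) + r * (\<Sum>j=1..n. snd x j)))
      = (\<Sum>w\<in>{1..n} \<rightarrow>\<^sub>E {0..r * m}. Q ^ (\<Sum>a\<in>{1..n}. w a))"
  proof (rule sum.reindex_bij_witness[where i = "word_to_marked r n" and j = "marked_to_word r n"])
    fix x assume x: "x \<in> marked_colored_perms r n m"
    show "word_to_marked r n (marked_to_word r n x) = x"
      using x by (rule word_to_marked_marked_to_word)
    show "marked_to_word r n x \<in> {1..n} \<rightarrow>\<^sub>E {0..r * m}"
      using x by (rule marked_to_word_in)
    obtain \<sigma> z \<mu> where xe: "x = ((\<sigma>, z), \<mu>)"
      by (metis prod.collapse)
    have "\<sigma> permutes {1..n}"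
      using x colored_permsD(1) by (auto simp: xe marked_colored_perms_def)
    then show "Q ^ (\<Sum>a\<in>{1..n}. marked_to_word r n x a)
        = Q ^ (fmaj_r r n (fst x) + r * (\<Sum>j=1..n. snd x j))"
      unfolding xe fst_conv snd_conv by (simp only: sum_marked_to_word)
  next
    fix w assume w: "w \<in> {1..n} \<rightarrow>\<^sub>E {0..r * m}"
    show "marked_to_word r n (word_to_marked r n w) = w"
      using w by (rule marked_to_word_word_to_marked)
    show "word_to_marked r n w \<in> marked_colored_perms r n m"
      using assms w by (rule word_to_marked_in)
  qed
  also have "\<dots> = qint Q (r * m + 1) ^ n"
    by (simp add: sum_PiE_power_sum)
  finally show ?thesis .
qed

lemma monom_one_eq_qX_power: "monom (1::int) e = qX ^ e"
  by (simp add: monom_altdef)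

lemma sum_Acol_mult:
  "(\<Sum>l\<le>n. Acol r n l * f l) = (\<Sum>p\<in>colored_perms r n. qX ^ fmaj_r r n p * f (des_r n p))"
proof -
  have "(\<Sum>l\<le>n. Acol r n l * f l)
      = (\<Sum>l\<le>n. \<Sum>p\<in>{p \<in> colored_perms r n. des_r n p = l}. qX ^ fmaj_r r n p * f (des_r n p))"
    unfolding Acol_def monom_one_eq_qX_power sum_distrib_right by (intro sum.cong) auto
  also have "\<dots> = (\<Sum>p\<in>colored_perms r n. qX ^ fmaj_r r n p * f (des_r n p))"
    by (rule sum.group[OF finite_colored_perms]) (auto simp: des_r_le)
  finally show ?thesis .
qed

theorem colored_worpitzky:
  assumes "0 < r"
  shows "qint qX (r * m + 1) ^ n = (\<Sum>l\<le>n. Acol r n l * gauss_binom (qX ^ r) (m + n - l) n)"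
proof -
  let ?P = "colored_perms r n"
  let ?G = "\<lambda>l. gauss_binom (qX ^ r) (m + n - l) n"
  have "(\<Sum>l\<le>n. Acol r n l * ?G l) = (\<Sum>p\<in>?P. qX ^ fmaj_r r n p * ?G (des_r n p))"
    by (rule sum_Acol_mult)
  also have "\<dots> = (\<Sum>p\<in>{p \<in> ?P. des_r n p \<le> m}. qX ^ fmaj_r r n p * ?G (des_r n p))"
  proof (rule sum.mono_neutral_right[OF finite_colored_perms])
    show "\<forall>p\<in>?P - {p \<in> ?P. des_r n p \<le> m}. qX ^ fmaj_r r n p * ?G (des_r n p) = 0"
    proof
      fix p assume "p \<in> ?P - {p \<in> ?P. des_r n p \<le> m}"
      then have "m + n - des_r n p < n"
        using des_r_le[of n p] by auto
      then show "qX ^ fmaj_r r n p * ?G (des_r n p) = 0"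
        by (simp add: gauss_binom_eq_0)
    qed
  qed auto
  also have "\<dots> = (\<Sum>p\<in>{p \<in> ?P. des_r n p \<le> m}.
      \<Sum>\<mu>\<in>decreasing_seqs n (m - des_r n p). qX ^ (fmaj_r r n p + r * (\<Sum>j=1..n. \<mu> j)))"
  proof (rule sum.cong)
    fix p assume "p \<in> {p \<in> ?P. des_r n p \<le> m}"
    then have "m + n - des_r n p = (m - des_r n p) + n"
      by simp
    then have G: "?G (des_r n p)
        = (\<Sum>\<mu>\<in>decreasing_seqs n (m - des_r n p). (qX ^ r) ^ (\<Sum>j=1..n. \<mu> j))"
      by (simp only: sum_decreasing_seqs)
    have split: "qX ^ (fmaj_r r n p + r * s) = qX ^ fmaj_r r n p * (qX ^ r) ^ s" for s
      by (simp add: power_add power_mult)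
    show "qX ^ fmaj_r r n p * ?G (des_r n p)
        = (\<Sum>\<mu>\<in>decreasing_seqs n (m - des_r n p). qX ^ (fmaj_r r n p + r * (\<Sum>j=1..n. \<mu> j)))"
      unfolding split G by (simp only: sum_distrib_left)
  qed simp
  also have "\<dots>
      = (\<Sum>x\<in>marked_colored_perms r n m. qX ^ (fmaj_r r n (fst x) + r * (\<Sum>j=1..n. snd x j)))"
    unfolding marked_colored_perms_def
    by (subst sum.Sigma) (auto simp: finite_decreasing_seqs finite_colored_perms case_prod_beta)
  also have "\<dots> = qint qX (r * m + 1) ^ n"
    using assms by (rule sum_marked_colored_perms)
  finally show ?thesis ..
qed

lemma Scol_eq_sum_Acol_gauss_binom:
  assumes "0 < r" and "k \<le> n"
  shows "qX ^ (r * (k choose 2) + k) * qint qX r ^ k * qfact (qX ^ r) k * Scol r n k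
    = (\<Sum>l\<le>k. (qX ^ r) ^ (k * (k - l)) * Acol r n l * gauss_binom (qX ^ r) (n - l) (k - l))"
proof (rule gauss_binom_coeffs_unique[OF _ assms(2)])
  fix m
  show "(\<Sum>k\<le>n. (qX ^ (r * (k choose 2) + k) * qint qX r ^ k * qfact (qX ^ r) k * Scol r n k)
      * gauss_binom (qX ^ r) m k)
    = (\<Sum>k\<le>n. (\<Sum>l\<le>k. (qX ^ r) ^ (k * (k - l)) * Acol r n l * gauss_binom (qX ^ r) (n - l) (k - l))
      * gauss_binom (qX ^ r) m k)"
    using power_qint_eq_sum_Scol_gauss_binom[of r m n] colored_worpitzky[OF assms(1), of m n]
      sum_gauss_binom_expand[of "Acol r n" "qX ^ r" m n] by simp
qed

theorem theorem4p2:
  fixes r n k :: nat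
  assumes "r \<ge> 1" and "k \<le> n"
  shows "monom 1 (r * ((k + 1) choose 2) + k - r * k) * (qint qX r) ^ k
           * qfact (qX ^ r) k * Scol r n k
         = (\<Sum>l=0..k. monom 1 (r * k * (k - l)) * Acol r n l
              * qbinom (qX ^ r) (n - l) (k - l))"
proof -
  let ?Q = "qX ^ r :: int poly"
  have "(k + 1) choose 2 = (k choose 2) + k"
    using binomial_Suc_Suc[of k 1] by (simp add: numeral_2_eq_2)
  then have "r * ((k + 1) choose 2) + k - r * k = r * (k choose 2) + k"
    by (simp add: algebra_simps)
  then have "monom 1 (r * ((k + 1) choose 2) + k - r * k) * (qint qX r) ^ k
      * qfact ?Q k * Scol r n k
      = qX ^ (r * (k choose 2) + k) * qint qX r ^ k * qfact ?Q k * Scol r n k"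
    by (simp only: monom_one_eq_qX_power)
  also have "\<dots> = (\<Sum>l\<le>k. ?Q ^ (k * (k - l)) * Acol r n l * gauss_binom ?Q (n - l) (k - l))"
    using assms by (intro Scol_eq_sum_Acol_gauss_binom) simp_all
  also have "\<dots> = (\<Sum>l=0..k. monom 1 (r * k * (k - l)) * Acol r n l * qbinom ?Q (n - l) (k - l))"
    unfolding atLeast0AtMost
  proof (rule sum.cong[OF refl])
    fix l assume "l \<in> {..k}"
    then show "?Q ^ (k * (k - l)) * Acol r n l * gauss_binom ?Q (n - l) (k - l)
        = monom 1 (r * k * (k - l)) * Acol r n l * qbinom ?Q (n - l) (k - l)"
      using assms(2) by (simp add: monom_one_eq_qX_power power_mult qbinom_eq_gauss_binom
          qfact_qX_power_nonzero mult.assoc)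
  qed
  finally show ?thesis .
qed

end
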